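(* Let $U=U_1\times\cdots\times U_m\subset\mathbb{R}^m_+$ be a convex set with each $U_i\subseteq\mathbb{R}$, let $C\subseteq\mathbb{R}^m$ be a set, and let $\overline{U}=U\cap C$. Let $c\in\mathbb{R}^{n_1}$, $d\in\mathbb{R}^{n_2}$, and $a_i\in\mathbb{R}^{n_1}$, $g_i\in\mathbb{R}^{n_2}$ for $i\in[m]$. Define $$z_{\rm ro}=\inf_{x\in\mathbb{R}^{n_1},\,y\in\mathbb{R}^{n_2}}\{c^Tx+d^Ty:\ a_i^Tx+g_i^Ty\ge u_i\ \ \forall u\in U,\ \forall i\in[m]\},$$ $$z_{\rm cp}=\inf_{x\in\mathbb{R}^{n_1},\,y\in\mathbb{R}^{n_2}}\{c^Tx+d^Ty:\ a_i^Tx+g_i^Ty\ge u_i\ \ \forall u\in \overline{U},\ \forall i\in[m]\}.$$ Let $\rho_{\rm ro}=\rho\big(U^\downarrow,\Pi(\overline{U}^\downarrow)\big)$ and $\gamma_{\rm ro}=\gamma\big(U^\downarrow,\Pi(\overline{U}^\downarrow)\big)$. If $0<z_{\rm cp}\le z_{\rm ro}<\infty$, then $$\rho_{\rm ro}\le \frac{z_{\rm cp}}{z_{\rm ro}}\le \gamma_{\rm ro}.$$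
   Context: $[m]=\{1,\dots,m\}$. For $S\subseteq\mathbb{R}^m_+$, the down-hull is $S^\downarrow=\{t\in\mathbb{R}^m_+:\exists s\in S,\ t\le s\text{ componentwise}\}$. For $S\subseteq\mathbb{R}^m$, $\Pi_i(S)=\{u_i:\exists u\in S\text{ whose $i$-th coordinate is }u_i\}$ and $\Pi(S)=\Pi_1(S)\times\cdots\times\Pi_m(S)$. For a set $S$ and $r\ge0$, $rS=\{rx:x\in S\}$. For sets $S_1,S_2$: $\rho(S_1,S_2)=\max\{\rho\ge 0:\rho S_1\subseteq S_2\}$ and $\gamma(S_1,S_2)=\min\{\gamma\ge0: S_2\subseteq \gamma S_1\}$. *)

theory Defs
  imports "HOL-Analysis.Analysis"
begin

definition down_hull :: "(real^'m) set \<Rightarrow> (real^'m) set" where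
  "down_hull S = {t. (\<forall>i. 0 \<le> t$i) \<and> (\<exists>s\<in>S. \<forall>i. t$i \<le> s$i)}"

definition proj_coord :: "'m \<Rightarrow> (real^'m) set \<Rightarrow> real set" where
  "proj_coord i S = {u$i | u. u \<in> S}"

definition proj_box :: "(real^'m) set \<Rightarrow> (real^'m) set" where
  "proj_box S = {u. \<forall>i. u$i \<in> proj_coord i S}"

text \<open>rho(S1,S2) = max{rho >= 0 : rho S1 subseteq S2}, gamma(S1,S2) = min{gamma >= 0 : S2 subseteq gamma S1};
  rendered as Sup / Inf in the extended reals (they coincide with max / min whenever these exist).\<close>
definition rho_fac :: "(real^'m) set \<Rightarrow> (real^'m) set \<Rightarrow> ereal" where
  "rho_fac S1 S2 = Sup {ereal r | r. r \<ge> 0 \<and> (\<lambda>x. r *\<^sub>R x) ` S1 \<subseteq> S2}"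

definition gamma_fac :: "(real^'m) set \<Rightarrow> (real^'m) set \<Rightarrow> ereal" where
  "gamma_fac S1 S2 = Inf {ereal g | g. g \<ge> 0 \<and> S2 \<subseteq> (\<lambda>x. g *\<^sub>R x) ` S1}"

definition robust_val ::
  "real^'n1 \<Rightarrow> real^'n2 \<Rightarrow> ('m \<Rightarrow> real^'n1) \<Rightarrow> ('m \<Rightarrow> real^'n2) \<Rightarrow> (real^'m) set \<Rightarrow> ereal" where
  "robust_val c d a g S =
     Inf ((\<lambda>(x, y). ereal (c \<bullet> x + d \<bullet> y)) `
          {(x, y). \<forall>u\<in>S. \<forall>i. a i \<bullet> x + g i \<bullet> y \<ge> u$i})"

end

theory Submission
  imports Defs
begin

text \<open>Feasibility of (x, y) for the robust constraints is unchanged when the uncertainty set is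
  replaced by the box of its coordinate projections or, for nonnegative sets, by its down-hull; and
  the feasible region for r U is r times the one for U, so the optimal value is positively
  homogeneous in U. Hence, with V = U \<inter> C, every r with r U_down \<subseteq> \<Pi>(V_down) satisfies
  r z_ro \<le> z_cp, and every r with \<Pi>(V_down) \<subseteq> r U_down satisfies z_cp \<le> r z_ro; taking the
  supremum, resp. infimum, over r gives the two bounds.\<close>

definition robust_feasible ::
  "('m \<Rightarrow> real^'n1) \<Rightarrow> ('m \<Rightarrow> real^'n2) \<Rightarrow> (real^'m) set \<Rightarrow> ((real^'n1) \<times> (real^'n2)) set" where
  "robust_feasible a g S = {p. \<forall>u\<in>S. \<forall>i. u$i \<le> a i \<bullet> fst p + g i \<bullet> snd p}"

lemma robust_val_eq_Inf_feasible:
  "robust_val c d a g S = Inf ((\<lambda>p. ereal (c \<bullet> fst p + d \<bullet> snd p)) ` robust_feasible a g S)"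
  by (simp add: robust_val_def robust_feasible_def case_prod_beta')

lemma robust_val_le_feasible:
  "p \<in> robust_feasible a g S \<Longrightarrow> robust_val c d a g S \<le> ereal (c \<bullet> fst p + d \<bullet> snd p)"
  unfolding robust_val_eq_Inf_feasible by (rule Inf_lower) (rule imageI)

lemma robust_val_mono_feasible:
  "robust_feasible a g T \<subseteq> robust_feasible a g S \<Longrightarrow> robust_val c d a g S \<le> robust_val c d a g T"
  unfolding robust_val_eq_Inf_feasible by (intro Inf_superset_mono image_mono)

lemma robust_feasible_antimono: "S \<subseteq> T \<Longrightarrow> robust_feasible a g T \<subseteq> robust_feasible a g S"
  unfolding robust_feasible_def by blast

lemma robust_feasible_iff_proj_coord:
  "p \<in> robust_feasible a g S \<longleftrightarrow> (\<forall>i. \<forall>t\<in>proj_coord i S. t \<le> a i \<bullet> fst p + g i \<bullet> snd p)"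
  unfolding robust_feasible_def proj_coord_def by blast

lemma proj_coord_proj_box: "proj_coord i (proj_box S) = proj_coord i S"
proof
  show "proj_coord i (proj_box S) \<subseteq> proj_coord i S"
    unfolding proj_coord_def proj_box_def by blast
  have "S \<subseteq> proj_box S"
    unfolding proj_coord_def proj_box_def by blast
  then show "proj_coord i S \<subseteq> proj_coord i (proj_box S)"
    unfolding proj_coord_def by blast
qed

lemma robust_feasible_proj_box: "robust_feasible a g (proj_box S) = robust_feasible a g S"
  by (simp add: set_eq_iff robust_feasible_iff_proj_coord proj_coord_proj_box)

lemma robust_feasible_down_hull:
  assumes "\<forall>u\<in>S. \<forall>i. 0 \<le> u$i"
  shows "robust_feasible a g (down_hull S) = robust_feasible a g S"
proof
  have "S \<subseteq> down_hull S"
    using assms unfolding down_hull_def by blast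
  then show "robust_feasible a g (down_hull S) \<subseteq> robust_feasible a g S"
    by (rule robust_feasible_antimono)
  show "robust_feasible a g S \<subseteq> robust_feasible a g (down_hull S)"
  proof
    fix p assume p: "p \<in> robust_feasible a g S"
    have "t$i \<le> a i \<bullet> fst p + g i \<bullet> snd p" if "t \<in> down_hull S" for t i
    proof -
      obtain s where "s \<in> S" "t$i \<le> s$i"
        using \<open>t \<in> down_hull S\<close> unfolding down_hull_def by blast
      with p show ?thesis
        unfolding robust_feasible_def by (blast intro: order_trans)
    qed
    then show "p \<in> robust_feasible a g (down_hull S)"
      unfolding robust_feasible_def by blast
  qed
qed

lemma robust_val_proj_box: "robust_val c d a g (proj_box S) = robust_val c d a g S"
  by (simp add: robust_val_eq_Inf_feasible robust_feasible_proj_box)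

lemma robust_val_down_hull:
  "\<forall>u\<in>S. \<forall>i. 0 \<le> u$i \<Longrightarrow> robust_val c d a g (down_hull S) = robust_val c d a g S"
  by (simp add: robust_val_eq_Inf_feasible robust_feasible_down_hull)

lemma robust_feasible_scaleR:
  assumes "0 < r"
  shows "robust_feasible a g ((*\<^sub>R) r ` S) = (*\<^sub>R) r ` robust_feasible a g S"
proof -
  have rhs_scaleR: "a i \<bullet> fst (k *\<^sub>R p) + g i \<bullet> snd (k *\<^sub>R p) = k * (a i \<bullet> fst p + g i \<bullet> snd p)"
    for k p i
    by (simp add: inner_scaleR_right distrib_left)
  have le_inverse: "u \<le> inverse r * l \<longleftrightarrow> r * u \<le> l" for u l
    using assms by (simp add: field_simps)
  have "p \<in> robust_feasible a g ((*\<^sub>R) r ` S) \<longleftrightarrow> inverse r *\<^sub>R p \<in> robust_feasible a g S" for p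
    unfolding robust_feasible_def mem_Collect_eq rhs_scaleR by (simp add: le_inverse)
  moreover have "p \<in> (*\<^sub>R) r ` F \<longleftrightarrow> inverse r *\<^sub>R p \<in> F" for p and F :: "((real^'n1) \<times> (real^'n2)) set"
    using assms by (auto intro!: image_eqI[where x="inverse r *\<^sub>R p"])
  ultimately show ?thesis
    by blast
qed

lemma robust_val_scaleR:
  assumes "0 < r"
  shows "robust_val c d a g ((*\<^sub>R) r ` S) = ereal r * robust_val c d a g S"
proof -
  let ?obj = "\<lambda>p. ereal (c \<bullet> fst p + d \<bullet> snd p)"
  have "robust_val c d a g ((*\<^sub>R) r ` S) = Inf ((\<lambda>p. ereal r * ?obj p) ` robust_feasible a g S)"
    unfolding robust_val_eq_Inf_feasible robust_feasible_scaleR[OF assms] image_image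
    by (simp add: inner_scaleR_right distrib_left)
  also have "\<dots> = ereal r * robust_val c d a g S"
    using ereal_Inf_cmult[OF assms, of "\<lambda>z. z \<in> ?obj ` robust_feasible a g S"]
    unfolding robust_val_eq_Inf_feasible by (simp add: setcompr_eq_image image_image)
  finally show ?thesis .
qed

lemma robust_val_scaleR_zero: "robust_val c d a g ((*\<^sub>R) 0 ` S) \<le> 0"
  using robust_val_le_feasible[of 0 a g "(*\<^sub>R) 0 ` S" c d]
  by (simp add: robust_feasible_def zero_ereal_def)

lemma robust_val_scaled_down_hull_le:
  assumes U_nonneg: "\<forall>u\<in>U. \<forall>i. 0 \<le> u$i" and V_nonneg: "\<forall>u\<in>V. \<forall>i. 0 \<le> u$i"
    and "0 < r" and scaled_sub: "(*\<^sub>R) r ` down_hull U \<subseteq> proj_box (down_hull V)"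
  shows "ereal r * robust_val c d a g U \<le> robust_val c d a g V"
proof -
  have "ereal r * robust_val c d a g U = robust_val c d a g ((*\<^sub>R) r ` down_hull U)"
    by (simp only: robust_val_scaleR[OF \<open>0 < r\<close>] robust_val_down_hull[OF U_nonneg])
  also have "\<dots> \<le> robust_val c d a g (proj_box (down_hull V))"
    by (intro robust_val_mono_feasible robust_feasible_antimono scaled_sub)
  also have "\<dots> = robust_val c d a g V"
    by (simp only: robust_val_proj_box robust_val_down_hull[OF V_nonneg])
  finally show ?thesis .
qed

lemma robust_val_le_scaled_down_hull:
  assumes U_nonneg: "\<forall>u\<in>U. \<forall>i. 0 \<le> u$i" and V_nonneg: "\<forall>u\<in>V. \<forall>i. 0 \<le> u$i"
    and "0 \<le> r" and scaled_sup: "proj_box (down_hull V) \<subseteq> (*\<^sub>R) r ` down_hull U"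
  shows "robust_val c d a g V \<le> ereal r * robust_val c d a g U"
proof -
  have "robust_val c d a g V = robust_val c d a g (proj_box (down_hull V))"
    by (simp only: robust_val_proj_box robust_val_down_hull[OF V_nonneg])
  also have "\<dots> \<le> robust_val c d a g ((*\<^sub>R) r ` down_hull U)"
    by (intro robust_val_mono_feasible robust_feasible_antimono scaled_sup)
  also have "\<dots> \<le> ereal r * robust_val c d a g U"
  proof (cases "r = 0")
    case True
    have "robust_val c d a g ((*\<^sub>R) r ` down_hull U) \<le> 0"
      unfolding True by (rule robust_val_scaleR_zero)
    also have "0 = ereal r * robust_val c d a g U"
      unfolding True zero_ereal_def[symmetric] by simp
    finally show ?thesis .
  next
    case False
    with \<open>0 \<le> r\<close> have "0 < r" by simp
    then show ?thesis
      unfolding robust_val_scaleR[OF \<open>0 < r\<close>] robust_val_down_hull[OF U_nonneg] by simp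
  qed
  finally show ?thesis .
qed

lemma rho_fac_le_robust_val_ratio:
  assumes U_nonneg: "\<forall>u\<in>U. \<forall>i. 0 \<le> u$i" and V_nonneg: "\<forall>u\<in>V. \<forall>i. 0 \<le> u$i"
    and p: "robust_val c d a g V = ereal p" and q: "robust_val c d a g U = ereal q"
    and "0 \<le> p" "0 < q"
  shows "rho_fac (down_hull U) (proj_box (down_hull V)) \<le> ereal p / ereal q"
  unfolding rho_fac_def
proof (rule Sup_least, clarify)
  fix r assume "0 \<le> r" and scaled_sub: "(*\<^sub>R) r ` down_hull U \<subseteq> proj_box (down_hull V)"
  have "r \<le> p / q"
  proof (cases "r = 0")
    case False
    with \<open>0 \<le> r\<close> have "ereal r * ereal q \<le> ereal p"
      using robust_val_scaled_down_hull_le[OF U_nonneg V_nonneg _ scaled_sub, of c d a g] p q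
      by simp
    with \<open>0 < q\<close> show ?thesis by (simp add: pos_le_divide_eq)
  qed (use \<open>0 \<le> p\<close> \<open>0 < q\<close> in simp)
  with \<open>0 < q\<close> show "ereal r \<le> ereal p / ereal q" by simp
qed

lemma robust_val_ratio_le_gamma_fac:
  assumes U_nonneg: "\<forall>u\<in>U. \<forall>i. 0 \<le> u$i" and V_nonneg: "\<forall>u\<in>V. \<forall>i. 0 \<le> u$i"
    and p: "robust_val c d a g V = ereal p" and q: "robust_val c d a g U = ereal q"
    and "0 < q"
  shows "ereal p / ereal q \<le> gamma_fac (down_hull U) (proj_box (down_hull V))"
  unfolding gamma_fac_def
proof (rule Inf_greatest, clarify)
  fix r assume "0 \<le> r" and scaled_sup: "proj_box (down_hull V) \<subseteq> (*\<^sub>R) r ` down_hull U"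
  have "ereal p \<le> ereal r * ereal q"
    using robust_val_le_scaled_down_hull[OF U_nonneg V_nonneg \<open>0 \<le> r\<close> scaled_sup, of c d a g] p q
    by simp
  with \<open>0 < q\<close> show "ereal p / ereal q \<le> ereal r" by (simp add: pos_divide_le_eq)
qed

theorem theorem1:
  fixes U C :: "(real^'m) set"
    and Ucomp :: "'m \<Rightarrow> real set"
    and c :: "real^'n1" and d :: "real^'n2"
    and a :: "'m \<Rightarrow> real^'n1" and g :: "'m \<Rightarrow> real^'n2"
  assumes U_prod: "U = {u. \<forall>i. u$i \<in> Ucomp i}"
    and U_nonneg: "\<forall>u\<in>U. \<forall>i. 0 \<le> u$i"
    and U_convex: "convex U"
    and pos: "0 < robust_val c d a g (U \<inter> C)"
    and le: "robust_val c d a g (U \<inter> C) \<le> robust_val c d a g U"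
    and fin: "robust_val c d a g U < \<infinity>"
  shows "rho_fac (down_hull U) (proj_box (down_hull (U \<inter> C)))
           \<le> robust_val c d a g (U \<inter> C) / robust_val c d a g U
       \<and> robust_val c d a g (U \<inter> C) / robust_val c d a g U
           \<le> gamma_fac (down_hull U) (proj_box (down_hull (U \<inter> C)))"
proof -
  have V_nonneg: "\<forall>u\<in>U \<inter> C. \<forall>i. 0 \<le> u$i"
    using U_nonneg by blast
  obtain q where q: "robust_val c d a g U = ereal q"
    using fin pos le by (cases "robust_val c d a g U") auto
  obtain p where p: "robust_val c d a g (U \<inter> C) = ereal p"
    using pos le q by (cases "robust_val c d a g (U \<inter> C)") auto
  have "0 < p" "0 < q"
    using pos le p q by auto
  then show ?thesis
    using rho_fac_le_robust_val_ratio[OF U_nonneg V_nonneg p q]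
      robust_val_ratio_le_gamma_fac[OF U_nonneg V_nonneg p q]
    unfolding p q by simp
qed

end
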